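(* Let $n\ge2$, $1\le p\le n-1$, $r\in[n]$, and let $\pi\in S_n$ be a $p$-resultant permutation. There exists $\sigma\in S_{n-1}$ such that the configuration $\sigma^{(r,p)}$ topples to $\pi$ if and only if: (1) if $r\le n-p$, then $r$ is a left-to-right maximum of $\pi^{\text{left}}$; and (2) if $r>n-p$, then $r$ is a right-to-left minimum of $\pi^{\text{right}}$.
   Context: For $m\ge1$, $1\le p\le m$: sites are $0,\dots,m+1$; a configuration in $\mathcal{S}(m,p)$ places $m+1$ distinct chips labeled $1,\dots,m+1$ with sites $0,m+1$ empty, one chip at each site of $\{1,\dots,m\}\setminus\{p\}$ and two chips at site $p$. Toppling: while some site holds at least two chips, choose such a site $i$ and two chips $\alpha<\beta$ there and move $\alpha$ to $i-1$, $\beta$ to $i+1$. It is known this terminates with at most one chip per site and the final configuration is independent of the choices; reading labels left to right gives a permutation in $S_{m+1}$ to which the configuration topples. For $\sigma\in S_m$ and $r\in[m+1]$, $\sigma^{(r,p)}\in\mathcal{S}(m,p)$ places at site $i$ ($1\le i\le m$) chip $\sigma_i$ if $\sigma_i<r$ and $\sigma_i+1$ otherwise, plus chip $r$ at site $p$. $\pi\in S_n$ is $p$-resultant if some configuration in $\mathcal{S}(n-1,p)$ topples to it; then $\pi^{\text{left}}=(\pi_1,\dots,\pi_{n-p})$ is a permutation of $[n-p]$ and $\pi^{\text{right}}=(\pi_{n-p+1},\dots,\pi_n)$ of $\{n-p+1,\dots,n\}$. Left-to-right maximum of $a_1\cdots a_k$: an entry $a_j=\max\{a_1,\dots,a_j\}$;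 right-to-left minimum: an entry $a_j=\min\{a_j,\dots,a_k\}$. *)

theory Defs
  imports Main
begin

text \<open>Configurations: sites are integers (the relevant sites are 0..m+1);
  a configuration assigns to each site the set of (distinct, labelled) chips on it.\<close>
type_synonym config = "int \<Rightarrow> nat set"

text \<open>Permutations of [k] are represented as lists: a list is a permutation of
  {1..k} iff it is distinct with element set {1..k}. Entry i (1-based) is xs ! (i-1).\<close>
definition is_perm :: "nat \<Rightarrow> nat list \<Rightarrow> bool" where
  "is_perm k xs \<longleftrightarrow> distinct xs \<and> set xs = {1..k}"

definition in_S :: "nat \<Rightarrow> nat \<Rightarrow> config \<Rightarrow> bool" where
  "in_S m p C \<longleftrightarrow>
     (\<forall>i. (i < 1 \<or> i > int m) \<longrightarrow> C i = {}) \<and>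
     (\<forall>i. 1 \<le> i \<and> i \<le> int m \<and> i \<noteq> int p \<longrightarrow> card (C i) = 1) \<and>
     card (C (int p)) = 2 \<and>
     (\<forall>i j. i \<noteq> j \<longrightarrow> C i \<inter> C j = {}) \<and>
     (\<Union>i. C i) = {1..m+1}"

definition topple_step :: "config \<Rightarrow> config \<Rightarrow> bool" where
  "topple_step C D \<longleftrightarrow> (\<exists>i a b. a \<in> C i \<and> b \<in> C i \<and> a < b \<and>
     D = C(i := C i - {a, b}, i - 1 := insert a (C (i - 1)), i + 1 := insert b (C (i + 1))))"

definition stable :: "config \<Rightarrow> bool" where
  "stable C \<longleftrightarrow> (\<forall>i. card (C i) \<le> 1)"

definition reading :: "nat \<Rightarrow> config \<Rightarrow> nat list" where
  "reading m C = concat (map (\<lambda>i. sorted_list_of_set (C (int i))) [0..<m+2])"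

text \<open>C (with sites 0..m+1) topples to the permutation pi: toppling terminates in a
  stable configuration (supported on sites 0..m+1) whose reading is pi.
  (Termination and independence of the choices are known facts.)\<close>
definition topples_to :: "nat \<Rightarrow> config \<Rightarrow> nat list \<Rightarrow> bool" where
  "topples_to m C pi \<longleftrightarrow> (\<exists>D. topple_step\<^sup>*\<^sup>* C D \<and> stable D \<and>
      (\<forall>i. D i \<noteq> {} \<longrightarrow> 0 \<le> i \<and> i \<le> int m + 1) \<and> reading m D = pi)"

definition sigma_conf :: "nat list \<Rightarrow> nat \<Rightarrow> nat \<Rightarrow> config" where
  "sigma_conf \<sigma> r p = (\<lambda>i.
     (if 1 \<le> i \<and> i \<le> int (length \<sigma>) then
        {let s = \<sigma> ! (nat i - 1) in if s < r then s else s + 1} else {})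
     \<union> (if i = int p then {r} else {}))"

definition p_resultant :: "nat \<Rightarrow> nat \<Rightarrow> nat list \<Rightarrow> bool" where
  "p_resultant n p pi \<longleftrightarrow> (\<exists>C. in_S (n - 1) p C \<and> topples_to (n - 1) C pi)"

definition ltr_max :: "nat list \<Rightarrow> nat \<Rightarrow> bool" where
  "ltr_max xs a \<longleftrightarrow> (\<exists>j < length xs. xs ! j = a \<and> (\<forall>k \<le> j. xs ! k \<le> a))"

definition rtl_min :: "nat list \<Rightarrow> nat \<Rightarrow> bool" where
  "rtl_min xs a \<longleftrightarrow> (\<exists>j < length xs. xs ! j = a \<and> (\<forall>k. j \<le> k \<and> k < length xs \<longrightarrow> a \<le> xs ! k))"

end

(*
  Toppling preserves the property that no interval of sites holds more than one chip in excess
  of its length. Hence two doubled sites are never adjacent, firings at different sites commute,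
  and by the diamond lemma the stable configuration reached is unique, so it may be computed
  along one particular order of firings. In that order the sites hold, at every stage, the chips
  already sorted out, an empty site, a row of p - 1 single chips, a pair, and the chips not yet
  reached. The smaller chip of the pair travels left through the row into the empty site (at
  every site it meets, the smaller of the two chips moves on), and the larger one moves right to
  form the next pair. A chip sorted out is smaller than the p chips then to its right, so the
  n - p chips sorted out are 1, ..., n - p, and following a chip of the initial pair shows that it
  ends up as a left-to-right maximum of this left part or as a right-to-left minimum of the rest.
  Conversely, if r has this property, exchanging r with the last chip, respectively the first
  chip, in the sorted initial row gives a configuration in which r sits in the pair and which
  relaxes to the given permutation.
*)
theory Submission
  imports Defs "HOL-Library.Confluence" "HOL-Library.Multiset"
begin

section \<open>Unique normal forms\<close>

lemma unique_normal_form_if_diamond: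
  assumes preserved: "\<And>x y. I x \<Longrightarrow> R x y \<Longrightarrow> I y"
    and diamond: "\<And>x y z. I x \<Longrightarrow> R x y \<Longrightarrow> R x z \<Longrightarrow> y \<noteq> z \<Longrightarrow> \<exists>u. R y u \<and> R z u"
    and "I x" and "R\<^sup>*\<^sup>* x y" and "R\<^sup>*\<^sup>* x z" and "\<nexists>u. R y u" and "\<nexists>u. R z u"
  shows "y = z"
proof -
  define R' where "R' = (\<lambda>x y. I x \<and> R x y)"
  have "strong_confluentp R'"
  proof
    fix x y z assume "R' x y" "R' x z"
    then show "\<exists>u. R'\<^sup>*\<^sup>* y u \<and> R'\<^sup>=\<^sup>= z u"
      using diamond preserved unfolding R'_def by (cases "y = z") blast+
  qed
  then have confl: "confluentp R'" by (rule strong_confluentp_imp_confluentp)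
  have restrict: "R'\<^sup>*\<^sup>* x w" if "R\<^sup>*\<^sup>* x w" "I x" for x w
    using that
  proof (induction rule: converse_rtranclp_induct)
    case (step x' y')
    then have "R' x' y'" "R'\<^sup>*\<^sup>* y' w" using preserved by (auto simp: R'_def)
    then show ?case by (rule converse_rtranclp_into_rtranclp)
  qed simp
  obtain u where "R'\<^sup>*\<^sup>* y u" "R'\<^sup>*\<^sup>* z u"
    using confluentpD[OF confl restrict[OF \<open>R\<^sup>*\<^sup>* x y\<close> \<open>I x\<close>] restrict[OF \<open>R\<^sup>*\<^sup>* x z\<close> \<open>I x\<close>]]
    by blast
  moreover have "w = v" if "R'\<^sup>*\<^sup>* w v" "\<nexists>u. R w u" for w v
    using that by (cases rule: converse_rtranclpE) (auto simp: R'_def)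
  ultimately show "y = z" using assms(6,7) by metis
qed

section \<open>Left-to-right maxima and right-to-left minima\<close>

lemma ltr_max_Cons_iff: "ltr_max (w # ws) e \<longleftrightarrow> w = e \<or> (w \<le> e \<and> ltr_max ws e)"
proof
  assume "ltr_max (w # ws) e"
  then obtain j where j: "j < length (w # ws)" "(w # ws) ! j = e" "\<forall>k \<le> j. (w # ws) ! k \<le> e"
    unfolding ltr_max_def by blast
  show "w = e \<or> (w \<le> e \<and> ltr_max ws e)"
  proof (cases j)
    case (Suc j')
    then have "ltr_max ws e" unfolding ltr_max_def using j by (intro exI[of _ j']) fastforce
    then show ?thesis using j(3) by fastforce
  qed (use j in simp)
next
  assume "w = e \<or> (w \<le> e \<and> ltr_max ws e)"
  then show "ltr_max (w # ws) e"
  proof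
    assume "w \<le> e \<and> ltr_max ws e"
    then obtain j where "j < length ws" "ws ! j = e" "\<forall>k \<le> j. ws ! k \<le> e" "w \<le> e"
      unfolding ltr_max_def by blast
    then show ?thesis
      unfolding ltr_max_def by (intro exI[of _ "Suc j"]) (auto simp: less_eq_Suc_le nth_Cons')
  qed (auto simp: ltr_max_def)
qed

lemma ltr_max_set: "ltr_max xs e \<Longrightarrow> e \<in> set xs"
  unfolding ltr_max_def by auto

lemma ltr_max_split: "ltr_max L r \<Longrightarrow> \<exists>us vs. L = us @ r # vs \<and> (\<forall>u \<in> set us. u \<le> r)"
proof (induction L)
  case Nil
  then show ?case by (simp add: ltr_max_def)
next
  case (Cons w ws)
  show ?case
  proof (cases "w = r")
    case True
    then have "w # ws = [] @ r # ws \<and> (\<forall>u \<in> set []. u \<le> r)" by simp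
    then show ?thesis by blast
  next
    case False
    then obtain us vs where "ws = us @ r # vs" "\<forall>u \<in> set us. u \<le> r" "w \<le> r"
      using Cons by (auto simp: ltr_max_Cons_iff)
    then have "w # ws = (w # us) @ r # vs \<and> (\<forall>u \<in> set (w # us). u \<le> r)" by simp
    then show ?thesis by blast
  qed
qed

lemma rtl_min_Nil [simp]: "\<not> rtl_min [] e"
  unfolding rtl_min_def by simp

lemma rtl_min_Cons_iff: "rtl_min (w # ws) e \<longleftrightarrow> (w = e \<and> (\<forall>y \<in> set ws. e \<le> y)) \<or> rtl_min ws e"
proof
  assume "rtl_min (w # ws) e"
  then obtain j where j: "j < length (w # ws)" "(w # ws) ! j = e"
    "\<forall>k. j \<le> k \<and> k < length (w # ws) \<longrightarrow> e \<le> (w # ws) ! k"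
    unfolding rtl_min_def by blast
  show "(w = e \<and> (\<forall>y \<in> set ws. e \<le> y)) \<or> rtl_min ws e"
  proof (cases j)
    case 0
    have "e \<le> y" if y: "y \<in> set ws" for y
    proof -
      obtain i where i: "i < length ws" "ws ! i = y" using y[unfolded in_set_conv_nth] by blast
      have "e \<le> (w # ws) ! Suc i" using j(3)[rule_format, of "Suc i"] i(1) 0 by simp
      then show ?thesis using i(2) by simp
    qed
    moreover have "w = e" using j(2) 0 by simp
    ultimately show ?thesis by blast
  next
    case (Suc j')
    have "e \<le> ws ! k" if "j' \<le> k" "k < length ws" for k
      using j(3)[rule_format, of "Suc k"] that Suc by simp
    then have "rtl_min ws e" unfolding rtl_min_def using j Suc by (intro exI[of _ j']) simp
    then show ?thesis ..
  qed
next
  assume "(w = e \<and> (\<forall>y \<in> set ws. e \<le> y)) \<or> rtl_min ws e"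
  then show "rtl_min (w # ws) e"
  proof
    assume e: "w = e \<and> (\<forall>y \<in> set ws. e \<le> y)"
    have "e \<le> (w # ws) ! k" if "k < length (w # ws)" for k
      using that e by (cases k) auto
    then show ?thesis unfolding rtl_min_def using e by (intro exI[of _ 0]) simp
  next
    assume "rtl_min ws e"
    then obtain j where j: "j < length ws" "ws ! j = e" "\<forall>k. j \<le> k \<and> k < length ws \<longrightarrow> e \<le> ws ! k"
      unfolding rtl_min_def by blast
    have "e \<le> (w # ws) ! k" if "Suc j \<le> k" "k < length (w # ws)" for k
      using that j(3)[rule_format, of "k - 1"] by (cases k) auto
    then show ?thesis unfolding rtl_min_def using j by (intro exI[of _ "Suc j"]) simp
  qed
qed

lemma rtl_min_set: "rtl_min xs e \<Longrightarrow> e \<in> set xs"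
  unfolding rtl_min_def by auto

lemma rtl_min_append_left: "rtl_min ys e \<Longrightarrow> rtl_min (xs @ ys) e"
  by (induction xs) (auto simp: rtl_min_Cons_iff)

lemma rtl_min_append_right: "rtl_min xs e \<Longrightarrow> \<forall>y \<in> set ys. e \<le> y \<Longrightarrow> rtl_min (xs @ ys) e"
  by (induction xs) (auto simp: rtl_min_Cons_iff)

lemma rtl_min_split: "rtl_min R r \<Longrightarrow> \<exists>us vs. R = us @ r # vs \<and> (\<forall>v \<in> set vs. r \<le> v)"
proof (induction R)
  case (Cons w ws)
  show ?case
  proof (cases "w = r \<and> (\<forall>y \<in> set ws. r \<le> y)")
    case True
    then have "w # ws = [] @ r # ws \<and> (\<forall>v \<in> set ws. r \<le> v)" by simp
    then show ?thesis by blast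
  next
    case False
    then obtain us vs where "ws = us @ r # vs" "\<forall>v \<in> set vs. r \<le> v"
      using Cons by (auto simp: rtl_min_Cons_iff)
    then have "w # ws = (w # us) @ r # vs" by simp
    then show ?thesis using \<open>\<forall>v \<in> set vs. r \<le> v\<close> by blast
  qed
qed simp

section \<open>Toppling preserves sparseness\<close>

definition fire :: "config \<Rightarrow> int \<Rightarrow> nat \<Rightarrow> nat \<Rightarrow> config" where
  "fire C i a b =
     C(i := C i - {a, b}, i - 1 := insert a (C (i - 1)), i + 1 := insert b (C (i + 1)))"

lemma topple_step_iff_fire:
  "topple_step C D \<longleftrightarrow> (\<exists>i a b. a \<in> C i \<and> b \<in> C i \<and> a < b \<and> D = fire C i a b)"
  unfolding topple_step_def fire_def by simp

lemma fire_commute: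
  assumes "j \<notin> {i - 1, i, i + 1}"
  shows "fire (fire C i a b) j c d = fire (fire C j c d) i a b"
  using assms unfolding fire_def by (intro ext) (auto simp: fun_upd_def insert_commute add.commute)

lemma stable_no_topple_step:
  assumes "stable C" and "\<forall>i. finite (C i)"
  shows "\<not> topple_step C D"
proof
  assume "topple_step C D"
  then obtain i a b where "a \<in> C i" "b \<in> C i" "a < b" unfolding topple_step_def by blast
  then have "card {a, b} \<le> card (C i)" using assms(2) by (intro card_mono) auto
  moreover have "card {a, b} = 2" using \<open>a < b\<close> by simp
  moreover have "card (C i) \<le> 1" using \<open>stable C\<close> unfolding stable_def by blast
  ultimately show False by simp
qed

definition sparse :: "config \<Rightarrow> bool" where
  "sparse C \<longleftrightarrow> (\<forall>i. finite (C i)) \<and> (\<forall>i j. i \<noteq> j \<longrightarrow> C i \<inter> C j = {}) \<and>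
     (\<forall>h l. card (\<Union> (C ` {h..l})) \<le> card {h..l} + 1)"

lemma sparse_site_eq:
  assumes "sparse C" and "a \<in> C i" and "b \<in> C i" and "a \<noteq> b"
  shows "C i = {a, b}"
proof -
  have "card (\<Union> (C ` {i..i})) \<le> card {i..i} + 1" using \<open>sparse C\<close> unfolding sparse_def by blast
  then have "card (C i) \<le> 2" by simp
  moreover have "finite (C i)" using \<open>sparse C\<close> unfolding sparse_def by blast
  moreover have "{a, b} \<subseteq> C i" "card {a, b} = 2" using assms(2-4) by auto
  ultimately show ?thesis by (metis card_seteq)
qed

lemma sparse_pairs_not_adjacent:
  assumes "sparse C" and "{a, b} \<subseteq> C i" "a \<noteq> b" and "{c, d} \<subseteq> C (i + 1)" "c \<noteq> d"
  shows False
proof -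
  have "card (\<Union> (C ` {i..i + 1})) \<le> card {i..i + 1} + 1"
    using \<open>sparse C\<close> unfolding sparse_def by blast
  moreover have "{i..i + 1} = {i, i + 1}" by auto
  ultimately have "card (C i \<union> C (i + 1)) \<le> 3" by simp
  moreover have "C i \<inter> C (i + 1) = {}" "finite (C i)" "finite (C (i + 1))"
    using \<open>sparse C\<close> unfolding sparse_def by auto
  moreover have "C i = {a, b}" "C (i + 1) = {c, d}"
    using sparse_site_eq[OF \<open>sparse C\<close>] assms(2-5) by auto
  ultimately show False using assms(3,5) by (simp add: card_Un_disjoint)
qed

lemma mem_fire:
  assumes "sparse C" and "a \<in> C i" "b \<in> C i" "a < b"
  shows "x \<in> fire C i a b k \<longleftrightarrow> (x = a \<and> k = i - 1) \<or> (x = b \<and> k = i + 1) \<or> (x \<notin> {a, b} \<and> x \<in> C k)"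
proof -
  have "C i = {a, b}" using sparse_site_eq assms by blast
  moreover have "a \<notin> C k" "b \<notin> C k" if "k \<noteq> i" for k
    using assms that unfolding sparse_def by blast+
  ultimately show ?thesis unfolding fire_def by auto
qed

lemma chips_fire:
  assumes "sparse C" and "a \<in> C i" "b \<in> C i" "a < b"
  shows "\<Union> (fire C i a b ` I) =
    (\<Union> (C ` I) - {a, b}) \<union> (if i - 1 \<in> I then {a} else {}) \<union> (if i + 1 \<in> I then {b} else {})"
  using mem_fire[OF assms] by auto

lemma sparse_chips_beside_pair:
  assumes "sparse C" and "card (C i) = 2" and "i \<notin> I" and "insert i I = {h..l}"
  shows "card (\<Union> (C ` I)) \<le> card I"
proof -
  have fin: "finite I" "finite (\<Union> (C ` I))" "finite (C i)"
    using assms(1,4) finite_atLeastAtMost_int[of h l]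
      unfolding sparse_def by (metis finite_insert finite_UN)+
  have "C i \<inter> C k = {}" if "k \<in> I" for k
    using assms(1,3) that unfolding sparse_def by metis
  then have "C i \<inter> \<Union> (C ` I) = {}" by blast
  then have "card (\<Union> (C ` insert i I)) = 2 + card (\<Union> (C ` I))"
    using assms(2) fin by (simp add: card_Un_disjoint)
  moreover have "card (\<Union> (C ` {h..l})) \<le> card {h..l} + 1"
    using assms(1) unfolding sparse_def by blast
  moreover have "card (insert i I) = card I + 1" using assms(3) fin by simp
  ultimately show ?thesis unfolding assms(4) by simp
qed

lemma card_le_insert_Suc:
  assumes "finite A" and "B \<subseteq> insert x A"
  shows "card B \<le> card A + 1"
proof -
  have "card B \<le> card (insert x A)" using assms by (intro card_mono) auto
  also have "\<dots> \<le> card A + 1" using assms(1) by (simp add: card_insert_if)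
  finally show ?thesis .
qed

lemma card_chips_fire_le:
  assumes "sparse C" and "a \<in> C i" "b \<in> C i" "a < b"
  shows "card (\<Union> (fire C i a b ` {h..l})) \<le> card {h..l} + 1"
proof -
  let ?I = "{h..l}"
  have card_i: "card (C i) = 2" using sparse_site_eq[OF assms(1-3)] \<open>a < b\<close> by simp
  have old: "card (\<Union> (C ` ?I)) \<le> card ?I + 1" using assms(1) unfolding sparse_def by blast
  have fin: "finite (\<Union> (C ` ?I))" using assms(1) unfolding sparse_def by blast
  consider (inside) "i \<in> ?I \<or> (i - 1 \<notin> ?I \<and> i + 1 \<notin> ?I)"
    | (left) "i \<notin> ?I" "i - 1 \<in> ?I" "l = i - 1"
    | (right) "i \<notin> ?I" "i + 1 \<in> ?I" "h = i + 1"
    by (cases "i \<in> ?I"; cases "i - 1 \<in> ?I"; cases "i + 1 \<in> ?I") auto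
  then show ?thesis
  proof cases
    case inside
    moreover have "a \<in> \<Union> (C ` ?I)" "b \<in> \<Union> (C ` ?I)" if "i \<in> ?I"
      using that assms(2,3) by blast+
    ultimately have "\<Union> (fire C i a b ` ?I) \<subseteq> \<Union> (C ` ?I)"
      unfolding chips_fire[OF assms] by auto
    then show ?thesis using card_mono[OF fin] old by (meson order_trans)
  next
    case left
    then have "card (\<Union> (C ` ?I)) \<le> card ?I"
      by (intro sparse_chips_beside_pair[OF assms(1) card_i, of _ h i]) auto
    moreover have "\<Union> (fire C i a b ` ?I) \<subseteq> insert a (\<Union> (C ` ?I))"
      using left unfolding chips_fire[OF assms] by auto
    then have "card (\<Union> (fire C i a b ` ?I)) \<le> card (\<Union> (C ` ?I)) + 1"
      by (rule card_le_insert_Suc[OF fin])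
    ultimately show ?thesis by simp
  next
    case right
    then have "card (\<Union> (C ` ?I)) \<le> card ?I"
      by (intro sparse_chips_beside_pair[OF assms(1) card_i, of _ i l]) auto
    moreover have "\<Union> (fire C i a b ` ?I) \<subseteq> insert b (\<Union> (C ` ?I))"
      using right unfolding chips_fire[OF assms] by auto
    then have "card (\<Union> (fire C i a b ` ?I)) \<le> card (\<Union> (C ` ?I)) + 1"
      by (rule card_le_insert_Suc[OF fin])
    ultimately show ?thesis by simp
  qed
qed

lemma sparse_fire:
  assumes "sparse C" and "a \<in> C i" "b \<in> C i" "a < b"
  shows "sparse (fire C i a b)"
proof -
  have "finite (fire C i a b k)" for k using assms(1) unfolding sparse_def fire_def by simp
  moreover have "fire C i a b k \<inter> fire C i a b k' = {}" if "k \<noteq> k'" for k k'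
  proof -
    have "C k \<inter> C k' = {}" using that assms(1) unfolding sparse_def by blast
    then show ?thesis using that \<open>a < b\<close> by (auto simp: mem_fire[OF assms])
  qed
  ultimately show ?thesis unfolding sparse_def using card_chips_fire_le[OF assms] by blast
qed

lemma sparse_topple_step: "sparse C \<Longrightarrow> topple_step C D \<Longrightarrow> sparse D"
  unfolding topple_step_iff_fire using sparse_fire by blast

lemma sparse_topple_diamond:
  assumes "sparse C" and "topple_step C D1" "topple_step C D2" "D1 \<noteq> D2"
  shows "\<exists>E. topple_step D1 E \<and> topple_step D2 E"
proof -
  obtain i a b where ab: "a \<in> C i" "b \<in> C i" "a < b" and D1: "D1 = fire C i a b"
    using assms(2) unfolding topple_step_iff_fire by blast
  obtain j c d where cd: "c \<in> C j" "d \<in> C j" "c < d" and D2: "D2 = fire C j c d"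
    using assms(3) unfolding topple_step_iff_fire by blast
  have "i \<noteq> j"
  proof
    assume "i = j"
    then have "{a, b} = {c, d}" using sparse_site_eq[OF assms(1)] ab cd by (metis less_irrefl)
    then have "a = c \<and> b = d" using \<open>a < b\<close> \<open>c < d\<close> by (auto simp: doubleton_eq_iff)
    then show False using D1 D2 \<open>D1 \<noteq> D2\<close> \<open>i = j\<close> by simp
  qed
  moreover have "j \<noteq> i + 1" "i \<noteq> j + 1"
    using sparse_pairs_not_adjacent[OF assms(1)] ab cd
      by (metis empty_subsetI insert_subset less_irrefl)+
  ultimately have far: "j \<notin> {i - 1, i, i + 1}" by auto
  then have "D1 j = C j" "D2 i = C i" unfolding D1 D2 fire_def by auto
  then have "topple_step D1 (fire D1 j c d)" "topple_step D2 (fire D2 i a b)"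
    using ab cd unfolding topple_step_iff_fire by (metis (no_types))+
  moreover have "fire D1 j c d = fire D2 i a b" unfolding D1 D2 by (rule fire_commute[OF far])
  ultimately show ?thesis by metis
qed

lemma sparse_stable_result_unique:
  assumes "sparse C" and "topple_step\<^sup>*\<^sup>* C D" "stable D" and "topple_step\<^sup>*\<^sup>* C D'" "stable D'"
  shows "D = D'"
proof -
  have "sparse E" if "topple_step\<^sup>*\<^sup>* C E" for E
    using that by induction (auto intro: sparse_topple_step assms(1))
  then have "sparse D" "sparse D'" using assms(2,4) by blast+
  then have "\<nexists>E. topple_step D E" "\<nexists>E. topple_step D' E"
    using assms(3,5) stable_no_topple_step unfolding sparse_def by blast+
  with assms(1,2,4) show ?thesis
    using unique_normal_form_if_diamond[where I = sparse and R = topple_step]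
      sparse_topple_step sparse_topple_diamond by blast
qed

section \<open>Relaxing a row with one doubled site\<close>

definition conf_of :: "nat set list \<Rightarrow> config" where
  "conf_of L i = (if 0 \<le> i \<and> i < int (length L) then L ! nat i else {})"

lemma conf_of_append:
  "conf_of (A @ B) i = (if i < int (length A) then conf_of A i else conf_of B (i - int (length A)))"
  unfolding conf_of_def by (auto simp: nth_append nat_diff_distrib)

lemma conf_of_Cons: "conf_of (X # B) i = (if i = 0 then X else conf_of B (i - 1))"
  unfolding conf_of_def by (auto simp: nth_Cons' nat_diff_distrib)

lemma topple_step_conf_of:
  assumes "x < y"
  shows "topple_step (conf_of (pre @ [A, {x, y}, D] @ post))
                     (conf_of (pre @ [insert x A, {}, insert y D] @ post))"
proof -
  let ?i = "int (length pre) + 1"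
  let ?C = "conf_of (pre @ [A, {x, y}, D] @ post)"
  have sites: "?C ?i = {x, y}" "?C (?i - 1) = A" "?C (?i + 1) = D"
    by (simp_all add: conf_of_append conf_of_Cons)
  have "conf_of (pre @ [insert x A, {}, insert y D] @ post) = fire ?C ?i x y"
    unfolding fire_def sites by (rule ext) (simp add: conf_of_append conf_of_Cons)
  then show ?thesis unfolding topple_step_iff_fire using assms sites by blast
qed

abbreviation singletons :: "nat list \<Rightarrow> nat set list" where
  "singletons xs \<equiv> map (\<lambda>x. {x}) xs"

text \<open>\<open>sift ws c\<close> follows a chip \<open>c\<close> that arrives from the right at a row \<open>ws\<close> of sites holding
  one chip each: at every site the smaller of the two chips moves on to the left and the larger one
  stays. The result is the chip leaving the row on the left and the new row.\<close>

fun sift :: "nat list \<Rightarrow> nat \<Rightarrow> nat \<times> nat list" where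
  "sift [] c = (c, [])"
| "sift (w # ws) c = (case sift ws c of (c', Q) \<Rightarrow> (min w c', max w c' # Q))"

lemma mset_sift: "sift ws c = (x, Q) \<Longrightarrow> add_mset x (mset Q) = add_mset c (mset ws)"
  by (induction ws arbitrary: x Q) (auto split: prod.splits simp: min_def max_def)

lemma set_sift: "sift ws c = (x, Q) \<Longrightarrow> insert x (set Q) = insert c (set ws)"
  by (drule arg_cong[where f = set_mset, OF mset_sift]) simp

lemma sift_le: "sift ws c = (x, Q) \<Longrightarrow> \<forall>y \<in> set (c # ws). x \<le> y"
  by (induction ws arbitrary: x Q) (fastforce split: prod.splits simp: min_def)+

lemma sift_distinct:
  assumes "sift ws c = (x, Q)" and "distinct (c # ws)"
  shows "distinct (x # Q)"
  using mset_eq_imp_distinct_iff[of "x # Q" "c # ws"] mset_sift[OF assms(1)] assms(2) by simp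

lemma sift_pair:
  assumes "distinct (Q @ [a, b] @ zs)" and "sift Q (min a b) = (x, Q')"
  shows "distinct (x # Q' @ max a b # zs)" "insert x (set Q') = insert (min a b) (set Q)"
    "length Q' = length Q" "\<forall>y \<in> set (Q @ [a, b]). x \<le> y"
proof -
  have "distinct (min a b # Q)" using assms(1) by (auto simp: min_def)
  then have "distinct (x # Q')" using sift_distinct[OF assms(2)] by simp
  moreover show set_Q': "insert x (set Q') = insert (min a b) (set Q)"
    by (rule set_sift[OF assms(2)])
  ultimately show "distinct (x # Q' @ max a b # zs)" using assms(1) by (auto simp: min_def max_def)
  show "length Q' = length Q" using arg_cong[OF mset_sift[OF assms(2)], of size] by simp
  show "\<forall>y \<in> set (Q @ [a, b]). x \<le> y" using sift_le[OF assms(2)] by auto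
qed

lemma topple_sift:
  assumes "distinct (s # ws)" and "s < b" and "sift ws s = (x, Q)"
  shows "topple_step\<^sup>*\<^sup>* (conf_of (pre @ [H] @ singletons ws @ [{s, b}, Y] @ post))
                         (conf_of (pre @ [insert x H, {}] @ singletons Q @ [insert b Y] @ post))"
  using assms
proof (induction ws arbitrary: pre H x Q)
  case Nil
  then show ?case using topple_step_conf_of[of s b pre H Y post] by auto
next
  case (Cons w ws)
  obtain c Q' where sift_ws: "sift ws s = (c, Q')" by (metis surj_pair)
  have x: "x = min w c" and Q: "Q = max w c # Q'" using Cons.prems(3) sift_ws by auto
  have "c \<in> set (s # ws)" using set_sift[OF sift_ws] by auto
  then have "w \<noteq> c" using Cons.prems(1) by auto
  then have pair: "insert c {w} = {min w c, max w c}" "min w c < max w c"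
    by (auto simp: min_def max_def)
  have steps: "topple_step\<^sup>*\<^sup>* (conf_of (pre @ [H] @ singletons (w # ws) @ [{s, b}, Y] @ post))
      (conf_of (pre @ [H, {min w c, max w c}, {}] @ singletons Q' @ [insert b Y] @ post))"
    using Cons.IH[where pre = "pre @ [H]" and H = "{w}"] Cons.prems(1,2) sift_ws pair(1) by simp
  have step: "topple_step
      (conf_of (pre @ [H, {min w c, max w c}, {}] @ singletons Q' @ [insert b Y] @ post))
      (conf_of (pre @ [insert (min w c) H, {}, {max w c}] @ singletons Q' @ [insert b Y] @ post))"
    using topple_step_conf_of[OF pair(2)] by simp
  have "topple_step\<^sup>*\<^sup>* (conf_of (pre @ [H] @ singletons (w # ws) @ [{s, b}, Y] @ post))
      (conf_of (pre @ [insert (min w c) H, {}, {max w c}] @ singletons Q' @ [insert b Y] @ post))"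
    using steps step by (meson rtranclp.rtrancl_into_rtrancl)
  then show ?case unfolding x Q by simp
qed

text \<open>\<open>relax Q a b zs\<close> is the reading of the stable configuration reached from the row with an
  empty site, the sites \<open>Q\<close>, the pair \<open>{a, b}\<close>, the sites \<open>zs\<close> and an empty site: the smaller chip
  of the pair is sifted through \<open>Q\<close> into the empty site on the left, and the larger one moves right
  to form the next pair. The first \<open>length zs + 1\<close> entries are the sifted chips.\<close>

fun relax :: "nat list \<Rightarrow> nat \<Rightarrow> nat \<Rightarrow> nat list \<Rightarrow> nat list" where
  "relax Q a b [] = (case sift Q (min a b) of (x, Q') \<Rightarrow> x # Q' @ [max a b])"
| "relax Q a b (z # zs) = (case sift Q (min a b) of (x, Q') \<Rightarrow> x # relax Q' (max a b) z zs)"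

lemma relax_commute: "relax Q a b zs = relax Q b a zs"
  by (cases zs) (simp_all add: min.commute max.commute)

lemma topple_relax:
  assumes "distinct (Q @ [a, b] @ zs)"
  shows "topple_step\<^sup>*\<^sup>* (conf_of (singletons outs @ [{}] @ singletons Q @ [{a, b}] @ singletons zs
      @ [{}]))
           (conf_of (singletons (outs @ take (length zs + 1) (relax Q a b zs)) @ [{}] @
                     singletons (drop (length zs + 1) (relax Q a b zs))))"
  using assms
proof (induction zs arbitrary: outs Q a b)
  case Nil
  obtain x Q' where sift_Q: "sift Q (min a b) = (x, Q')" by (metis surj_pair)
  have pair: "{a, b} = {min a b, max a b}" "min a b < max a b" "distinct (min a b # Q)"
    using Nil.prems by (auto simp: min_def max_def)
  show ?case
    using topple_sift[OF pair(3,2) sift_Q, of "singletons outs" "{}" "{}" "[]"] sift_Q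
    unfolding pair(1) by simp
next
  case (Cons z zs)
  obtain x Q' where sift_Q: "sift Q (min a b) = (x, Q')" by (metis surj_pair)
  have pair: "{a, b} = {min a b, max a b}" "min a b < max a b" "distinct (min a b # Q)"
    using Cons.prems by (auto simp: min_def max_def)
  have "distinct (Q' @ [max a b, z] @ zs)" using sift_pair(1)[OF Cons.prems sift_Q] by simp
  then have rest: "topple_step\<^sup>*\<^sup>* (conf_of (singletons (outs @ [x]) @ [{}] @ singletons Q'
      @ [{max a b, z}] @ singletons zs @ [{}]))
      (conf_of (singletons ((outs @ [x]) @ take (length zs + 1) (relax Q' (max a b) z zs)) @
      [{}] @ singletons (drop (length zs + 1) (relax Q' (max a b) z zs))))"
    by (rule Cons.IH)
  have first: "topple_step\<^sup>*\<^sup>* (conf_of (singletons outs @ [{}] @ singletons Q @ [{a, b}]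
      @ singletons (z # zs) @ [{}]))
      (conf_of (singletons (outs @ [x]) @ [{}] @ singletons Q' @ [{max a b, z}] @ singletons zs
          @ [{}]))"
    using topple_sift[OF pair(3,2) sift_Q, of "singletons outs" "{}" "{z}" "singletons zs @ [{}]"]
    unfolding pair(1) by simp
  show ?case using rtranclp_trans[OF first rest] sift_Q by simp
qed

lemma mset_relax: "mset (relax Q a b zs) = mset (Q @ [a, b] @ zs)"
proof (induction zs arbitrary: Q a b)
  case Nil
  obtain x Q' where "sift Q (min a b) = (x, Q')" by (metis surj_pair)
  then show ?case using mset_sift[of Q "min a b" x Q'] by (auto simp: min_def max_def)
next
  case (Cons z zs)
  obtain x Q' where "sift Q (min a b) = (x, Q')" by (metis surj_pair)
  then show ?case using mset_sift[of Q "min a b" x Q'] Cons.IH[of Q' "max a b" z]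
    by (auto simp: min_def max_def)
qed

lemma length_relax: "length (relax Q a b zs) = length Q + length zs + 2"
  using arg_cong[OF mset_relax, of size] by simp

lemma stable_conf_of: "\<forall>A \<in> set L. card A \<le> 1 \<Longrightarrow> stable (conf_of L)"
  unfolding stable_def conf_of_def by (auto simp: nat_less_iff)

lemma conf_of_nonempty: "conf_of L i \<noteq> {} \<Longrightarrow> 0 \<le> i \<and> i < int (length L)"
  unfolding conf_of_def by (auto split: if_splits)

lemma reading_conf_of:
  "length L = m + 2 \<Longrightarrow> reading m (conf_of L) = concat (map sorted_list_of_set L)"
  unfolding reading_def
  by (intro arg_cong[where f = concat] nth_equalityI) (simp_all add: conf_of_def del: upt_Suc)

lemma reading_singletons: "concat (map sorted_list_of_set (singletons xs)) = xs"
  by (induction xs) auto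

definition doubled_conf :: "nat list \<Rightarrow> nat \<Rightarrow> nat \<Rightarrow> config" where
  "doubled_conf ys p c i =
     (if 1 \<le> i \<and> i \<le> int (length ys) then {ys ! (nat i - 1)} else {}) \<union>
     (if i = int p then {c} else {})"

lemma doubled_conf_disjoint:
  assumes "distinct (c # ys)" and "i \<noteq> j"
  shows "doubled_conf ys p c i \<inter> doubled_conf ys p c j = {}"
proof (rule ccontr)
  let ?D = "doubled_conf ys p c"
  have mem: "x \<in> ?D k \<longleftrightarrow> (1 \<le> k \<and> k \<le> int (length ys) \<and> x = ys ! (nat k - 1)) \<or> (k = int p \<and> x = c)"
    for x k unfolding doubled_conf_def by auto
  have c_not_nth: "c \<noteq> ys ! (nat k - 1)" if "1 \<le> k" "k \<le> int (length ys)" for k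
    using that assms(1) nth_mem[of "nat k - 1" ys] by auto
  assume "?D i \<inter> ?D j \<noteq> {}"
  then obtain x where x: "x \<in> ?D i" "x \<in> ?D j" by blast
  show False
  proof (cases "x = c")
    case True
    then have "i = int p" "j = int p" using x c_not_nth unfolding mem by blast+
    then show False using \<open>i \<noteq> j\<close> by simp
  next
    case False
    then have "1 \<le> i" "i \<le> int (length ys)" "1 \<le> j" "j \<le> int (length ys)"
      "ys ! (nat i - 1) = ys ! (nat j - 1)" using x unfolding mem by auto
    moreover have "nat i - 1 < length ys" "nat j - 1 < length ys" using calculation(1-4) by arith+
    ultimately have "nat i - 1 = nat j - 1" using assms(1) nth_eq_iff_index_eq by auto
    then show False using \<open>1 \<le> i\<close> \<open>1 \<le> j\<close> \<open>i \<noteq> j\<close> by arith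
  qed
qed

lemma sparse_doubled_conf:
  assumes "distinct (c # ys)"
  shows "sparse (doubled_conf ys p c)"
proof -
  let ?D = "doubled_conf ys p c"
  have "card (\<Union> (?D ` {h..l})) \<le> card {h..l} + 1" for h l
  proof -
    have "card (\<Union> (?D ` {h..l})) \<le> (\<Sum>k\<in>{h..l}. card (?D k))" by (rule card_UN_le) simp
    also have "\<dots> \<le> (\<Sum>k\<in>{h..l}. 1 + (if k = int p then 1 else 0))"
      by (intro sum_mono) (auto simp: doubled_conf_def card_insert_if)
    also have "\<dots> = card {h..l} + (\<Sum>k\<in>{h..l}. if k = int p then 1 else 0)"
      by (subst sum.distrib) simp
    also have "\<dots> \<le> card {h..l} + 1" by simp
    finally show ?thesis .
  qed
  moreover have "finite (?D i)" for i unfolding doubled_conf_def by simp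
  ultimately show ?thesis unfolding sparse_def using doubled_conf_disjoint[OF assms] by blast
qed

lemma doubled_conf_eq_conf_of:
  assumes "1 \<le> p" "p \<le> length ys"
  shows "doubled_conf ys p c =
    conf_of ([{}] @ singletons (take (p - 1) ys) @ [{ys ! (p - 1), c}] @ singletons (drop p ys)
        @ [{}])"
proof -
  have "[{}] @ singletons (take (p - 1) ys) @ [{ys ! (p - 1), c}] @ singletons (drop p ys) @ [{}] =
      [{}] @ (singletons ys)[p - 1 := {ys ! (p - 1), c}] @ [{}]"
    using assms upd_conv_take_nth_drop[of "p - 1" "singletons ys"] by (simp add: take_map drop_map)
  then show ?thesis using assms
    by (auto simp: fun_eq_iff doubled_conf_def conf_of_def nth_append nth_Cons' nth_list_update
        nat_diff_distrib)
qed

lemma UN_doubled_conf: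
  assumes "1 \<le> p" "p \<le> length ys"
  shows "(\<Union>i. doubled_conf ys p c i) = set (c # ys)"
proof
  have "ys ! (nat i - 1) \<in> set ys" if "1 \<le> i" "i \<le> int (length ys)" for i
    using that by (intro nth_mem) arith
  then show "(\<Union>i. doubled_conf ys p c i) \<subseteq> set (c # ys)"
    unfolding doubled_conf_def by (auto split: if_splits)
  have "ys ! k \<in> doubled_conf ys p c (int k + 1)" if "k < length ys" for k
    using that unfolding doubled_conf_def by (simp add: nat_add_distrib)
  moreover have "c \<in> doubled_conf ys p c (int p)" unfolding doubled_conf_def by simp
  ultimately show "set (c # ys) \<subseteq> (\<Union>i. doubled_conf ys p c i)"
    by (auto simp: in_set_conv_nth) blast
qed

lemma mset_pair_split:
  assumes "1 \<le> p" "p \<le> length ys"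
  shows "mset (take (p - 1) ys @ [ys ! (p - 1), c] @ drop p ys) = mset (c # ys)"
proof -
  have "take (p - 1) ys @ [ys ! (p - 1)] @ drop p ys = ys"
    using assms id_take_nth_drop[of "p - 1" ys] by simp
  then show ?thesis by (metis add_mset_add_single mset.simps mset_append union_assoc union_commute)
qed

lemma topples_to_doubled_conf:
  assumes "distinct (c # ys)" and "1 \<le> p" "p \<le> length ys"
  shows "topples_to (length ys) (doubled_conf ys p c) \<pi> \<longleftrightarrow>
    \<pi> = relax (take (p - 1) ys) (ys ! (p - 1)) c (drop p ys)"
proof -
  define \<rho> where "\<rho> = relax (take (p - 1) ys) (ys ! (p - 1)) c (drop p ys)"
  define k where "k = length (drop p ys) + 1"
  define F where "F = conf_of (singletons (take k \<rho>) @ [{}] @ singletons (drop k \<rho>))"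
  have "distinct (take (p - 1) ys @ [ys ! (p - 1), c] @ drop p ys)"
    using mset_eq_imp_distinct_iff[OF mset_pair_split[OF assms(2,3)]] assms(1) by blast
  from topple_relax[OF this, of "[]"]
  have path: "topple_step\<^sup>*\<^sup>* (doubled_conf ys p c) F"
    unfolding doubled_conf_eq_conf_of[OF assms(2,3)] F_def \<rho>_def k_def by simp
  have len: "length (singletons (take k \<rho>) @ [{}] @ singletons (drop k \<rho>)) = length ys + 2"
    using assms(2,3) unfolding \<rho>_def by (simp add: length_relax)
  have stable: "stable F" unfolding F_def by (rule stable_conf_of) auto
  have support: "\<forall>i. F i \<noteq> {} \<longrightarrow> 0 \<le> i \<and> i \<le> int (length ys) + 1"
    using conf_of_nonempty len unfolding F_def by fastforce
  have reading: "reading (length ys) F = \<rho>"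
    unfolding F_def reading_conf_of[OF len] by (simp add: reading_singletons del: map_map)
  show ?thesis unfolding \<rho>_def[symmetric]
  proof
    assume "topples_to (length ys) (doubled_conf ys p c) \<pi>"
    then obtain D where "topple_step\<^sup>*\<^sup>* (doubled_conf ys p c) D" "stable D"
        "reading (length ys) D = \<pi>"
      unfolding topples_to_def by blast
    then show "\<pi> = \<rho>"
      using sparse_stable_result_unique[OF sparse_doubled_conf[OF assms(1)] _ _ path stable] reading
      by blast
  next
    assume "\<pi> = \<rho>"
    then show "topples_to (length ys) (doubled_conf ys p c) \<pi>"
      unfolding topples_to_def using path stable support reading by blast
  qed
qed

section \<open>The two parts of the resulting permutation\<close>

lemma sift_rtl_min:
  assumes "distinct (c # ws)" and "sift ws c = (x, Q)" and "e = c \<or> rtl_min ws e"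
  shows "(x = e \<and> (\<forall>y \<in> set Q. e < y)) \<or> (x < e \<and> rtl_min Q e)"
  using assms
proof (induction ws arbitrary: x Q)
  case Nil
  then show ?case by (simp add: rtl_min_def)
next
  case (Cons w ws)
  obtain c' Q' where sift_ws: "sift ws c = (c', Q')" by (metis surj_pair)
  have x: "x = min w c'" and Q: "Q = max w c' # Q'" using Cons.prems(2) sift_ws by auto
  have set_Q': "insert c' (set Q') = insert c (set ws)" and "distinct (c' # Q')"
    using set_sift[OF sift_ws] sift_distinct[OF sift_ws] Cons.prems(1) by auto
  have c'_le: "\<forall>y \<in> set (c # ws). c' \<le> y" using sift_le[OF sift_ws] .
  show ?case
  proof (cases "w = e")
    case True
    then have "e \<noteq> c" "e \<notin> set ws" using Cons.prems(1) by auto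
    have "rtl_min (e # ws) e" using Cons.prems(3) True \<open>e \<noteq> c\<close> by simp
    then have "\<forall>y \<in> set ws. e \<le> y" using \<open>e \<notin> set ws\<close> rtl_min_set by (auto simp: rtl_min_Cons_iff)
    then have above: "\<forall>y \<in> set ws. e < y" using \<open>e \<notin> set ws\<close> by (auto simp: le_less)
    show ?thesis
    proof (cases "c' < e")
      case True
      then have "c' = c" using set_Q' above by (metis insert_iff not_less_iff_gr_or_eq)
      then have "\<forall>y \<in> set Q'. e < y" using set_Q' above \<open>distinct (c' # Q')\<close> by auto
      then show ?thesis using True \<open>w = e\<close> unfolding x Q by (auto simp: rtl_min_Cons_iff)
    next
      case False
      then have "e < c'" using set_Q' above \<open>e \<noteq> c\<close> by (metis insert_iff linorder_neqE_nat)
      then have "\<forall>y \<in> set Q'. e < y" using set_Q' c'_le by fastforce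
      then show ?thesis using \<open>e < c'\<close> \<open>w = e\<close> unfolding x Q by auto
    qed
  next
    case False
    then have "(c' = e \<and> (\<forall>y \<in> set Q'. e < y)) \<or> (c' < e \<and> rtl_min Q' e)"
      using Cons.IH[OF _ sift_ws] Cons.prems(1,3) by (auto simp: rtl_min_Cons_iff)
    then show ?thesis using False unfolding x Q by (auto simp: rtl_min_Cons_iff)
  qed
qed

lemma min_plus_card_le:
  assumes "B \<subseteq> {..N}" and "x \<in> B" and "\<forall>y \<in> B. x \<le> y"
  shows "x + card B \<le> N + 1"
proof -
  have "B \<subseteq> {x..N}" using assms by auto
  then have "card B \<le> N + 1 - x" using card_mono[of "{x..N}" B] by simp
  then show ?thesis using assms(1,2) by auto
qed

lemma sift_output_bounded:
  assumes "distinct (Q @ [a, b] @ zs)" and "set (Q @ [a, b]) \<subseteq> {..N}"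
    and "sift Q (min a b) = (x, Q')"
  shows "x + length Q + 1 \<le> N"
proof -
  note pair = sift_pair[OF assms(1,3)]
  have "x \<in> insert (min a b) (set Q)" using pair(2) by blast
  moreover have "min a b \<in> {a, b}" by (simp add: min_def)
  ultimately have "x \<in> set (Q @ [a, b])" by auto
  then have "x + card (set (Q @ [a, b])) \<le> N + 1"
    using min_plus_card_le[of "set (Q @ [a, b])" N x] pair(4) assms(2) by auto
  moreover have "card (set (Q @ [a, b])) = length Q + 2"
    using assms(1) distinct_card[of "Q @ [a, b]"] by simp
  ultimately show ?thesis by simp
qed

lemma relax_outputs_bounded:
  assumes "distinct (Q @ [a, b] @ zs)" and "set (Q @ [a, b] @ zs) \<subseteq> {..N}"
  shows "\<forall>x \<in> set (take (length zs + 1) (relax Q a b zs)). x + length Q + 1 \<le> N"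
  using assms
proof (induction zs arbitrary: Q a b)
  case Nil
  obtain x Q' where sift_Q: "sift Q (min a b) = (x, Q')" by (metis surj_pair)
  then show ?case using sift_output_bounded[OF Nil.prems(1) _ sift_Q] Nil.prems(2) by simp
next
  case (Cons z zs)
  obtain x Q' where sift_Q: "sift Q (min a b) = (x, Q')" by (metis surj_pair)
  note pair = sift_pair[OF Cons.prems(1) sift_Q]
  have "min a b \<in> {a, b}" "max a b \<in> {a, b}" by (simp_all add: min_def max_def)
  moreover have "set Q' \<subseteq> insert (min a b) (set Q)" using pair(2) by blast
  ultimately have "set (Q' @ [max a b, z] @ zs) \<subseteq> {..N}" using Cons.prems(2) by auto
  moreover have "distinct (Q' @ [max a b, z] @ zs)" using pair(1) by simp
  ultimately have "\<forall>y \<in> set (take (length zs + 1) (relax Q' (max a b) z zs)). y + length Q' + 1 \<le> N"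
    using Cons.IH by blast
  moreover have "x + length Q + 1 \<le> N"
    using sift_output_bounded[OF Cons.prems(1) _ sift_Q] Cons.prems(2) by simp
  ultimately show ?case using sift_Q pair(3) by simp
qed

lemma sift_pair_rtl_min:
  assumes "distinct (Q @ [a, b] @ zs)" and "sift Q (min a b) = (x, Q')"
    and "e \<in> {a, b} \<or> (rtl_min Q e \<and> e < max a b)"
  shows "(x = e \<and> (\<forall>y \<in> set Q'. e < y)) \<or> (x < e \<and> (e = max a b \<or> (rtl_min Q' e \<and> e < max a b)))"
proof -
  have "a \<noteq> b" using assms(1) by simp
  then have lt: "min a b < max a b" by (simp add: min_def max_def)
  show ?thesis
  proof (cases "e = max a b")
    case True
    have "x \<le> min a b" using sift_le[OF assms(2)] by simp
    then have "x < e" using True lt by (metis le_less_trans)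
    then show ?thesis using True by blast
  next
    case False
    then have "e = min a b \<or> rtl_min Q e" "e < max a b"
      using assms(3) lt by (auto simp: min_def max_def split: if_splits)
    moreover have "distinct (min a b # Q)" using assms(1) by (auto simp: min_def)
    ultimately show ?thesis using sift_rtl_min[OF _ assms(2)] by blast
  qed
qed

lemma relax_pair_ltr_max_or_rtl_min:
  assumes "distinct (Q @ [a, b] @ zs)" and "e \<in> {a, b} \<or> (rtl_min Q e \<and> e < max a b)"
  shows "ltr_max (take (length zs + 1) (relax Q a b zs)) e \<or>
    rtl_min (drop (length zs + 1) (relax Q a b zs)) e"
  using assms
proof (induction zs arbitrary: Q a b)
  case Nil
  obtain x Q' where sift_Q: "sift Q (min a b) = (x, Q')" by (metis surj_pair)
  have "rtl_min [e] e" by (simp add: rtl_min_Cons_iff)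
  then show ?case using sift_pair_rtl_min[OF Nil.prems(1) sift_Q Nil.prems(2)] sift_Q
    by (auto simp: ltr_max_Cons_iff intro: rtl_min_append_left rtl_min_append_right)
next
  case (Cons z zs)
  obtain x Q' where sift_Q: "sift Q (min a b) = (x, Q')" by (metis surj_pair)
  have "distinct (Q' @ [max a b, z] @ zs)" using sift_pair(1)[OF Cons.prems(1) sift_Q] by simp
  note IH = Cons.IH[OF this]
  consider "x = e" | "x < e" "e = max a b \<or> (rtl_min Q' e \<and> e < max a b)"
    using sift_pair_rtl_min[OF Cons.prems(1) sift_Q Cons.prems(2)] by blast
  then show ?case
  proof cases
    case 1
    then show ?thesis using sift_Q by (simp add: ltr_max_Cons_iff)
  next
    case 2
    then have "e \<in> {max a b, z} \<or> (rtl_min Q' e \<and> e < max (max a b) z)" by auto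
    then show ?thesis using IH 2(1) sift_Q by (auto simp: ltr_max_Cons_iff)
  qed
qed

lemma set_drop_distinct:
  assumes "distinct xs"
  shows "set (drop k xs) = set xs - set (take k xs)"
proof -
  have "set (take k xs) \<inter> set (drop k xs) = {}"
    using assms distinct_append[of "take k xs" "drop k xs"] by simp
  moreover have "set xs = set (take k xs) \<union> set (drop k xs)"
    using set_append[of "take k xs" "drop k xs"] by simp
  ultimately show ?thesis by blast
qed

lemma relax_split:
  assumes "distinct (Q @ [a, b] @ zs)" and "set (Q @ [a, b] @ zs) = {1..N}"
  shows "set (take (length zs + 1) (relax Q a b zs)) = {1..length zs + 1}"
    "set (drop (length zs + 1) (relax Q a b zs)) = {length zs + 2..N}"
proof -
  let ?\<rho> = "relax Q a b zs" and ?k = "length zs + 1"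
  have set_\<rho>: "set ?\<rho> = {1..N}"
    using arg_cong[OF mset_relax, of set_mset] assms(2) by simp
  have dist_\<rho>: "distinct ?\<rho>"
    using mset_eq_imp_distinct_iff[OF mset_relax] assms(1) by blast
  have N: "N = length Q + length zs + 2"
    using distinct_card[OF assms(1)] assms(2) by simp
  have "set (Q @ [a, b] @ zs) \<subseteq> {..N}" using assms(2) by auto
  from relax_outputs_bounded[OF assms(1) this]
  have "x \<le> ?k" if "x \<in> set (take ?k ?\<rho>)" for x using that N by fastforce
  moreover have "set (take ?k ?\<rho>) \<subseteq> set ?\<rho>" by (rule set_take_subset)
  ultimately have sub: "set (take ?k ?\<rho>) \<subseteq> {1..?k}" using set_\<rho> by fastforce
  moreover have "card (set (take ?k ?\<rho>)) = ?k"
    using distinct_card[of "take ?k ?\<rho>"] dist_\<rho> length_relax[of Q a b zs] by simp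
  ultimately show take_\<rho>: "set (take ?k ?\<rho>) = {1..?k}" by (simp add: card_subset_eq)
  show "set (drop ?k ?\<rho>) = {length zs + 2..N}"
    unfolding set_drop_distinct[OF dist_\<rho>] set_\<rho> take_\<rho> by auto
qed

lemma topples_to_doubled_conf_split:
  assumes "distinct (c # ys)" and "set (c # ys) = {1..n}" and "length ys = n - 1"
    and "1 \<le> p" "p \<le> n - 1" and "topples_to (n - 1) (doubled_conf ys p c) \<pi>"
  shows "set (take (n - p) \<pi>) = {1..n - p}" "set (drop (n - p) \<pi>) = {n - p + 1..n}"
    "ltr_max (take (n - p) \<pi>) c \<or> rtl_min (drop (n - p) \<pi>) c"
proof -
  let ?X = "take (p - 1) ys" and ?y = "ys ! (p - 1)" and ?Z = "drop p ys"
  have \<pi>: "\<pi> = relax ?X ?y c ?Z"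
    using topples_to_doubled_conf[of c ys p \<pi>] assms by simp
  have "p \<le> length ys" using assms(3,5) by simp
  then have mset: "mset (?X @ [?y, c] @ ?Z) = mset (c # ys)" by (rule mset_pair_split[OF assms(4)])
  have d: "distinct (?X @ [?y, c] @ ?Z)"
    unfolding mset_eq_imp_distinct_iff[OF mset] by (rule assms(1))
  have s: "set (?X @ [?y, c] @ ?Z) = {1..n}"
    unfolding mset_eq_setD[OF mset] by (rule assms(2))
  have k: "length ?Z + 1 = n - p" "length ?Z + 2 = n - p + 1" using assms(3-5) by simp_all
  show "set (take (n - p) \<pi>) = {1..n - p}" "set (drop (n - p) \<pi>) = {n - p + 1..n}"
    using relax_split[OF d s] unfolding \<pi>[symmetric] k by simp_all
  have "c \<in> {?y, c}" by simp
  from relax_pair_ltr_max_or_rtl_min[OF d] this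
  show "ltr_max (take (n - p) \<pi>) c \<or> rtl_min (drop (n - p) \<pi>) c" unfolding \<pi>[symmetric] k by blast
qed

section \<open>Prescribing the resulting permutation\<close>

lemma sift_below: "\<forall>q \<in> set Q. c < q \<Longrightarrow> sift Q c = (c, Q)"
  by (induction Q) auto

lemma sift_update:
  assumes "\<forall>q \<in> set ws. x < q" and "x < c" and "\<forall>q \<in> set ws'. c < q"
  shows "sift (ws @ x # ws') c = (x, ws @ c # ws')"
  using assms(1) by (induction ws) (use assms(2,3) sift_below[of ws' c] in auto)

lemma relax_after_sift:
  assumes "sift Q a = (x, Q')" and "a < b" and "\<forall>z \<in> set zs. z < b \<and> (\<forall>q \<in> set Q'. z < q)"
  shows "relax Q a b zs = x # zs @ Q' @ [b]"
  using assms
proof (induction zs arbitrary: Q a x Q')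
  case (Cons z zs)
  have "sift Q' z = (z, Q')" using Cons.prems(3) by (simp add: sift_below)
  then have "relax Q' z b zs = z # zs @ Q' @ [b]" using Cons.IH[of Q' z z Q'] Cons.prems(3) by simp
  then show ?case using Cons.prems(1,2) relax_commute[of Q' b z zs] by simp
qed simp

lemma relax_prefix:
  assumes "\<forall>y \<in> set (s # us). \<forall>q \<in> set Q. y < q" and "\<forall>u \<in> set us. u < b" and "s < b"
  shows "relax Q s b (us @ z # vs) = s # us @ relax Q b z vs"
  using assms
proof (induction us arbitrary: s)
  case Nil
  then show ?case using sift_below[of Q s] by simp
next
  case (Cons u us)
  then have "relax Q u b (us @ z # vs) = u # us @ relax Q b z vs" by simp
  then show ?case using sift_below[of Q s] Cons.prems relax_commute[of Q b u] by simp
qed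

lemma relax_sorted:
  assumes "\<forall>y \<in> set (x # L). y < B \<and> (\<forall>q \<in> set R. y < q)"
  shows "relax R x B L = x # L @ R @ [B]"
  using relax_after_sift[OF sift_below] assms by simp

lemma relax_exchange_ltr_max:
  assumes "\<forall>y \<in> set (x # us @ r # vs). y < B \<and> (\<forall>q \<in> set R. y < q)"
    and "x < r" and "\<forall>u \<in> set us. u < r"
  shows "relax R x r (us @ B # vs) = (x # us @ r # vs) @ R @ [B]"
proof -
  have "relax R x r (us @ B # vs) = x # us @ relax R r B vs"
    using assms by (intro relax_prefix) auto
  also have "relax R r B vs = r # vs @ R @ [B]"
    using assms(1) by (intro relax_sorted) auto
  finally show ?thesis by simp
qed

lemma relax_exchange_rtl_min:
  assumes "\<forall>y \<in> set (x # L). y < B \<and> (\<forall>q \<in> set (us @ r # ws). y < q)"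
    and "r < B" and "\<forall>q \<in> set ws. r < q"
  shows "relax (us @ x # ws) r B L = (x # L) @ (us @ r # ws) @ [B]"
  using relax_after_sift[OF sift_update] assms by simp

lemma exists_relax_eq_append_ltr_max:
  assumes "distinct (L @ R)" and "R \<noteq> []" and sep: "\<forall>x \<in> set L. \<forall>y \<in> set R. x < y"
    and L: "L = us @ r # vs" and us: "\<forall>u \<in> set us. u \<le> r"
  shows "\<exists>X y Z. relax X y r Z = L @ R \<and> mset (X @ [y, r] @ Z) = mset (L @ R)
      \<and> length X + 1 = length R"
proof -
  obtain R' B where R: "R = R' @ [B]" using \<open>R \<noteq> []\<close> by (cases R rule: rev_cases) auto
  show ?thesis
  proof (cases us)
    case Nil
    have "\<forall>y \<in> set (r # vs). y < B \<and> (\<forall>q \<in> set R'. y < q)" using sep unfolding L R Nil by simp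
    then have "relax R' r B vs = L @ R" using L R Nil by (simp add: relax_sorted)
    then have "relax R' B r vs = L @ R \<and> mset (R' @ [B, r] @ vs) = mset (L @ R)
        \<and> length R' + 1 = length R"
      using relax_commute[of R' B r vs] L R Nil by simp
    then show ?thesis by blast
  next
    case (Cons x us')
    have "x < r" "\<forall>u \<in> set us'. u < r" using us assms(1) L Cons by (auto simp: le_less)
    moreover have "\<forall>y \<in> set (x # us' @ r # vs). y < B \<and> (\<forall>q \<in> set R'. y < q)"
      using sep unfolding L R Cons by simp
    ultimately have "relax R' x r (us' @ B # vs) = L @ R
        \<and> mset (R' @ [x, r] @ us' @ B # vs) = mset (L @ R)
        \<and> length R' + 1 = length R"
      using relax_exchange_ltr_max L R Cons by simp
    then show ?thesis by blast
  qed
qed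

lemma exists_relax_eq_append_rtl_min:
  assumes "distinct (L @ R)" and "L \<noteq> []" and sep: "\<forall>x \<in> set L. \<forall>y \<in> set R. x < y"
    and R: "R = us @ r # vs" and vs: "\<forall>v \<in> set vs. r \<le> v"
  shows "\<exists>X y Z. relax X y r Z = L @ R \<and> mset (X @ [y, r] @ Z) = mset (L @ R)
      \<and> length X + 1 = length R"
proof -
  obtain x L' where L: "L = x # L'" using \<open>L \<noteq> []\<close> by (cases L) auto
  show ?thesis
  proof (cases vs rule: rev_cases)
    case Nil
    have "\<forall>y \<in> set (x # L'). y < r \<and> (\<forall>q \<in> set us. y < q)" using sep unfolding L R Nil by simp
    then have "relax us x r L' = L @ R \<and> mset (us @ [x, r] @ L') = mset (L @ R)
        \<and> length us + 1 = length R"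
      using relax_sorted L R Nil by simp
    then show ?thesis by blast
  next
    case (snoc ws B)
    have "r < B" "\<forall>q \<in> set ws. r < q" using vs assms(1) R snoc by (auto simp: le_less)
    moreover have "\<forall>y \<in> set (x # L'). y < B \<and> (\<forall>q \<in> set (us @ r # ws). y < q)"
      using sep unfolding L R snoc by simp
    ultimately have "relax (us @ x # ws) r B L' = L @ R"
      using relax_exchange_rtl_min L R snoc by simp
    then have "relax (us @ x # ws) B r L' = L @ R
        \<and> mset ((us @ x # ws) @ [B, r] @ L') = mset (L @ R)
        \<and> length (us @ x # ws) + 1 = length R"
      using relax_commute L R snoc by simp
    then show ?thesis by blast
  qed
qed

lemma exists_relax_eq_append:
  assumes "distinct (L @ R)" and "L \<noteq> []" "R \<noteq> []" and "\<forall>x \<in> set L. \<forall>y \<in> set R. x < y"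
    and "ltr_max L r \<or> rtl_min R r"
  shows "\<exists>X y Z. relax X y r Z = L @ R \<and> mset (X @ [y, r] @ Z) = mset (L @ R)
      \<and> length X + 1 = length R"
  using assms(5) ltr_max_split rtl_min_split
    exists_relax_eq_append_ltr_max[OF assms(1,3,4)] exists_relax_eq_append_rtl_min[OF assms(1,2,4)]
  by metis

lemma is_perm_length: "is_perm m xs \<Longrightarrow> length xs = m"
  unfolding is_perm_def using distinct_card by fastforce

definition bump :: "nat \<Rightarrow> nat \<Rightarrow> nat" where
  "bump r s = (if s < r then s else s + 1)"

definition unbump :: "nat \<Rightarrow> nat \<Rightarrow> nat" where
  "unbump r y = (if y < r then y else y - 1)"

lemma sigma_conf_eq_doubled_conf: "sigma_conf \<sigma> r p = doubled_conf (map (bump r) \<sigma>) p r"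
proof
  fix i
  show "sigma_conf \<sigma> r p i = doubled_conf (map (bump r) \<sigma>) p r i"
  proof (cases "1 \<le> i \<and> i \<le> int (length \<sigma>)")
    case True
    then have "nat i - 1 < length \<sigma>" by arith
    then show ?thesis using True unfolding sigma_conf_def doubled_conf_def bump_def Let_def by simp
  next
    case False
    then show ?thesis unfolding sigma_conf_def doubled_conf_def length_map by (simp only: if_False)
  qed
qed

lemma bump_unbump: "y \<noteq> r \<Longrightarrow> bump r (unbump r y) = y"
  unfolding bump_def unbump_def by auto

lemma bij_betw_bump:
  assumes "1 \<le> r" "r \<le> m + 1"
  shows "bij_betw (bump r) {1..m} ({1..m + 1} - {r})"
  by (rule bij_betw_byWitness[where f' = "unbump r"])
    (use assms in \<open>auto simp: bump_def unbump_def\<close>)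

lemma bump_perm:
  assumes "is_perm m \<sigma>" and "1 \<le> r" "r \<le> m + 1"
  shows "distinct (r # map (bump r) \<sigma>)" "set (r # map (bump r) \<sigma>) = {1..m + 1}"
proof -
  have \<sigma>: "distinct \<sigma>" "set \<sigma> = {1..m}" using assms(1) unfolding is_perm_def by auto
  note bij = bij_betw_bump[OF assms(2,3)]
  have "set (map (bump r) \<sigma>) = {1..m + 1} - {r}"
    using bij_betw_imp_surj_on[OF bij] \<sigma>(2) by simp
  moreover have "distinct (map (bump r) \<sigma>)"
    using \<sigma> bij_betw_imp_inj_on[OF bij] by (simp add: distinct_map)
  ultimately show "distinct (r # map (bump r) \<sigma>)" "set (r # map (bump r) \<sigma>) = {1..m + 1}"
    using assms(2,3) by auto
qed

lemma unbump_perm: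
  assumes "distinct (r # ys)" and "set (r # ys) = {1..m + 1}"
  shows "is_perm m (map (unbump r) ys)" "map (bump r) (map (unbump r) ys) = ys"
proof -
  have ys: "set ys = {1..m + 1} - {r}" "distinct ys" "r \<in> {1..m + 1}" using assms by auto
  have bij: "bij_betw (unbump r) ({1..m + 1} - {r}) {1..m}"
    using ys(3) by (intro bij_betw_byWitness[where f' = "bump r"]) (auto simp: bump_def unbump_def)
  show "is_perm m (map (unbump r) ys)" unfolding is_perm_def
    using ys bij_betw_imp_inj_on[OF bij] bij_betw_imp_surj_on[OF bij] by (simp add: distinct_map)
  have "bump r (unbump r y) = y" if "y \<in> set ys" for y
    using that assms(1) by (intro bump_unbump) auto
  then show "map (bump r) (map (unbump r) ys) = ys" unfolding map_map by (intro map_idI) simp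
qed

lemma card_in_S_Diff:
  assumes "in_S m p C" and "c \<in> C (int p)" and "1 \<le> i" "i \<le> int m"
  shows "card (C i - {c}) = 1"
proof (cases "i = int p")
  case True
  then show ?thesis using assms(1,2) unfolding in_S_def by (simp add: card_Diff_singleton)
next
  case False
  then have "c \<notin> C i" using assms(1,2) unfolding in_S_def by blast
  then show ?thesis using assms(1,3,4) False unfolding in_S_def by simp
qed

lemma in_S_doubled_conf:
  assumes "in_S m p C" and "1 \<le> p" "p \<le> m"
  obtains ys c where "C = doubled_conf ys p c" "length ys = m" "distinct (c # ys)"
      "set (c # ys) = {1..m + 1}"
proof -
  have empty: "\<And>i. i < 1 \<or> i > int m \<Longrightarrow> C i = {}"
    and double: "card (C (int p)) = 2"
    and disjoint: "\<And>i j. i \<noteq> j \<Longrightarrow> C i \<inter> C j = {}"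
    and union: "(\<Union>i. C i) = {1..m + 1}"
    using assms(1) unfolding in_S_def by blast+
  obtain c where c: "c \<in> C (int p)" using double by fastforce
  define ys where "ys = map (\<lambda>k. the_elem (C (int k) - {c})) [1..<m + 1]"
  have site: "C i - {c} = {ys ! (nat i - 1)}" if "1 \<le> i" "i \<le> int m" for i
  proof -
    have "nat i - 1 < m" "int (1 + (nat i - 1)) = i" using that by arith+
    then have "ys ! (nat i - 1) = the_elem (C i - {c})" unfolding ys_def by (simp del: upt_Suc)
    then show ?thesis
      using card_in_S_Diff[OF assms(1) c that] by (metis card_1_singletonE the_elem_eq)
  qed
  have c_site: "c \<in> C i \<longleftrightarrow> i = int p" for i using disjoint c by blast
  have len: "length ys = m" unfolding ys_def by simp
  have C: "C = doubled_conf ys p c"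
  proof
    fix i
    show "C i = doubled_conf ys p c i"
    proof (cases "1 \<le> i \<and> i \<le> int m")
      case True
      then have "C i = (C i - {c}) \<union> (if i = int p then {c} else {})" using c_site by auto
      then show ?thesis using True site len unfolding doubled_conf_def by simp
    next
      case False
      then show ?thesis using empty assms(2,3) len unfolding doubled_conf_def by auto
    qed
  qed
  have "(\<Union>i. C i) = set (c # ys)"
    unfolding C using UN_doubled_conf assms(2,3) len by simp
  then have "set (c # ys) = {1..m + 1}" using union by simp
  moreover note len
  moreover have "distinct (c # ys)" using calculation by (intro card_distinct) simp
  ultimately show thesis using C that by blast
qed

lemma sigma_conf_topples_to_if_split:
  assumes "is_perm n \<pi>" and "1 \<le> p" "p \<le> n - 1"
    and "set (take (n - p) \<pi>) = {1..n - p}" "set (drop (n - p) \<pi>) = {n - p + 1..n}"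
    and "ltr_max (take (n - p) \<pi>) r \<or> rtl_min (drop (n - p) \<pi>) r"
  shows "\<exists>\<sigma>. is_perm (n - 1) \<sigma> \<and> topples_to (n - 1) (sigma_conf \<sigma> r p) \<pi>"
proof -
  let ?L = "take (n - p) \<pi>" and ?R = "drop (n - p) \<pi>"
  have \<pi>: "distinct \<pi>" "set \<pi> = {1..n}" "length \<pi> = n"
    using assms(1) is_perm_length unfolding is_perm_def by auto
  have "?L \<noteq> []" "?R \<noteq> []" using assms(2-5) by auto
  moreover have "\<forall>x \<in> set ?L. \<forall>y \<in> set ?R. x < y" using assms(4,5) by auto
  ultimately obtain X y Z where XyZ: "relax X y r Z = \<pi>" "mset (X @ [y, r] @ Z) = mset \<pi>"
    "length X + 1 = length ?R"
    using exists_relax_eq_append[of ?L ?R r] assms(6) \<pi>(1) by auto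
  define ys where "ys = X @ [y] @ Z"
  have mset: "mset (r # ys) = mset \<pi>" using XyZ(2) unfolding ys_def by (simp add: add_mset_commute)
  have ys: "distinct (r # ys)" "set (r # ys) = {1..n}" "length ys = n - 1"
    using mset_eq_imp_distinct_iff[OF mset] arg_cong[OF mset, of set_mset]
      arg_cong[OF mset, of size] \<pi>
    by simp_all
  have X: "length X = p - 1" using XyZ(3) \<pi>(3) assms(2,3) by simp
  define \<sigma> where "\<sigma> = map (unbump r) ys"
  have "is_perm (n - 1) \<sigma>" "map (bump r) \<sigma> = ys"
    using unbump_perm[of r ys "n - 1"] ys assms(2,3) unfolding \<sigma>_def by auto
  moreover have "topples_to (n - 1) (doubled_conf ys p r) \<pi>"
    using topples_to_doubled_conf[of r ys p] ys assms(2,3) XyZ(1) X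
      unfolding ys_def by (simp add: nth_append)
  ultimately show ?thesis unfolding sigma_conf_eq_doubled_conf by auto
qed

theorem theorem2p13:
  fixes n p r :: nat and \<pi> :: "nat list"
  assumes "n \<ge> 2" and "1 \<le> p" and "p \<le> n - 1" and "1 \<le> r" and "r \<le> n"
    and "is_perm n \<pi>" and "p_resultant n p \<pi>"
  shows "(\<exists>\<sigma>. is_perm (n - 1) \<sigma> \<and> topples_to (n - 1) (sigma_conf \<sigma> r p) \<pi>) \<longleftrightarrow>
         ((r \<le> n - p \<longrightarrow> ltr_max (take (n - p) \<pi>) r) \<and>
          (r > n - p \<longrightarrow> rtl_min (drop (n - p) \<pi>) r))"
proof -
  have n: "n - 1 + 1 = n" using assms(1) by simp
  show ?thesis
  proof
    assume "\<exists>\<sigma>. is_perm (n - 1) \<sigma> \<and> topples_to (n - 1) (sigma_conf \<sigma> r p) \<pi>"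
    then obtain \<sigma> where \<sigma>: "is_perm (n - 1) \<sigma>"
        "topples_to (n - 1) (doubled_conf (map (bump r) \<sigma>) p r) \<pi>"
      unfolding sigma_conf_eq_doubled_conf by blast
    note bumped = bump_perm[OF \<sigma>(1) assms(4), unfolded n, OF assms(5)]
    note split_\<pi> = topples_to_doubled_conf_split[OF bumped _ assms(2,3) \<sigma>(2)]
    show "(r \<le> n - p \<longrightarrow> ltr_max (take (n - p) \<pi>) r) \<and> (r > n - p \<longrightarrow> rtl_min (drop (n - p) \<pi>) r)"
      using split_\<pi> is_perm_length[OF \<sigma>(1)] ltr_max_set rtl_min_set by fastforce
  next
    assume "(r \<le> n - p \<longrightarrow> ltr_max (take (n - p) \<pi>) r) \<and> (r > n - p \<longrightarrow> rtl_min (drop (n - p) \<pi>) r)"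
    then have r: "ltr_max (take (n - p) \<pi>) r \<or> rtl_min (drop (n - p) \<pi>) r" by linarith
    obtain C where C: "in_S (n - 1) p C" "topples_to (n - 1) C \<pi>"
      using assms(7) unfolding p_resultant_def by blast
    obtain ys c where ys: "C = doubled_conf ys p c" "length ys = n - 1" "distinct (c # ys)"
        "set (c # ys) = {1..n}"
      using in_S_doubled_conf[OF C(1) assms(2,3)] unfolding n by blast
    note split_\<pi> = topples_to_doubled_conf_split[OF ys(3,4,2) assms(2,3) C(2)[unfolded ys(1)]]
    show "\<exists>\<sigma>. is_perm (n - 1) \<sigma> \<and> topples_to (n - 1) (sigma_conf \<sigma> r p) \<pi>"
      by (rule sigma_conf_topples_to_if_split[OF assms(6,2,3) split_\<pi>(1,2) r])
  qed
qed

end
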